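(* Let $\mathcal{C}$ be a PL-cograph on a point set $\mathcal{P}$ that takes at least two distinct values, and let $X\neq Y$ be points of $\mathcal{P}$. Let $O$ be a point such that $e=\mathcal{C}(X,Y)$, $f=\mathcal{C}(O,X)$ and $g=\mathcal{C}(O,Y)$ are pairwise distinct (such a point exists). For each point $P\notin\{X,Y\}$ define its label $\lambda(P)$ to be the ordered pair $(\mathcal{C}(P,X),\mathcal{C}(P,Y))$ if $\mathcal{C}(P,X)\neq\mathcal{C}(P,Y)$, and the single edge $\mathcal{C}(P,O)$ if $\mathcal{C}(P,X)=\mathcal{C}(P,Y)$ (labels of the two kinds being regarded as different). Then distinct points $P\neq Q$ in $\mathcal{P}\setminus\{X,Y\}$ have distinct labels, i.e. each such point is uniquely determined by its label.
   Context: A cograph is a function $\mathcal{C}$ assigning to each unordered pair $\{P,Q\}$ of distinct elements of a set $\mathcal{P}$ (points) a value $\mathcal{C}(P,Q)$ (an edge). A PL-cograph is a cograph satisfying: (1) for distinct points $P,Q,R$, if $\mathcal{C}(P,Q)=\mathcal{C}(Q,R)$ then $\mathcal{C}(P,Q)=\mathcal{C}(P,R)$; (2) for distinct points $P,Q,R,S$, if $\mathcal{C}(P,Q)=\mathcal{C}(R,S)$ then $\mathcal{C}(P,Q)=\mathcal{C}(P,R)=\mathcal{C}(P,S)=\mathcal{C}(Q,R)=\mathcal{C}(Q,S)$. *)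

theory Defs
  imports Main
begin

text \<open>A cograph on the point set Pts is a function C assigning a value to each
  unordered pair {P,Q} of distinct points; we model it as a function on sets,
  only its values on two-element subsets {P,Q} (P \<noteq> Q, P,Q \<in> Pts) matter.\<close>

definition PL_cograph :: "'p set \<Rightarrow> ('p set \<Rightarrow> 'e) \<Rightarrow> bool" where
  "PL_cograph Pts C \<longleftrightarrow>
     (\<forall>P\<in>Pts. \<forall>Q\<in>Pts. \<forall>R\<in>Pts. P \<noteq> Q \<and> P \<noteq> R \<and> Q \<noteq> R \<longrightarrow>
        C {P,Q} = C {Q,R} \<longrightarrow> C {P,Q} = C {P,R}) \<and>
     (\<forall>P\<in>Pts. \<forall>Q\<in>Pts. \<forall>R\<in>Pts. \<forall>S\<in>Pts.
        P \<noteq> Q \<and> P \<noteq> R \<and> P \<noteq> S \<and> Q \<noteq> R \<and> Q \<noteq> S \<and> R \<noteq> S \<longrightarrow>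
        C {P,Q} = C {R,S} \<longrightarrow>
        C {P,Q} = C {P,R} \<and> C {P,Q} = C {P,S} \<and> C {P,Q} = C {Q,R} \<and> C {P,Q} = C {Q,S})"

definition cograph_nonconstant :: "'p set \<Rightarrow> ('p set \<Rightarrow> 'e) \<Rightarrow> bool" where
  "cograph_nonconstant Pts C \<longleftrightarrow>
     (\<exists>P\<in>Pts. \<exists>Q\<in>Pts. \<exists>R\<in>Pts. \<exists>S\<in>Pts. P \<noteq> Q \<and> R \<noteq> S \<and> C {P,Q} \<noteq> C {R,S})"

text \<open>Label of a point: Inl (ordered pair) or Inr (single edge); the sum type
  keeps labels of the two kinds different.\<close>
definition label :: "('p set \<Rightarrow> 'e) \<Rightarrow> 'p \<Rightarrow> 'p \<Rightarrow> 'p \<Rightarrow> 'p \<Rightarrow> ('e \<times> 'e) + 'e" where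
  "label C X Y Z P =
     (if C {P,X} \<noteq> C {P,Y} then Inl (C {P,X}, C {P,Y}) else Inr (C {P,Z}))"

end

theory Submission
  imports Defs
begin

text \<open>Axiom (1) says that in every triangle of a PL-cograph two equal edges force the third
  edge to be equal as well. If P and Q had the same pair label,
  the triangles PXQ and PYQ would give C{P,X} = C{P,Q} = C{P,Y}. If they had the same single
  label, the triangles PXY, QXY, XPQ, ZPQ and PZX would successively show that C{Z,X} = C{X,Y}.\<close>

lemma PL_cograph_triangle:
  assumes "PL_cograph Pts C"
    and "P \<in> Pts" "Q \<in> Pts" "R \<in> Pts" "P \<noteq> Q" "P \<noteq> R" "Q \<noteq> R"
    and "C {Q,P} = C {Q,R}"
  shows "C {P,R} = C {Q,P}"
  using assms unfolding PL_cograph_def by (metis insert_commute)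

lemma PL_cograph_same_edges_to_two_points:
  assumes "PL_cograph Pts C"
    and "P \<in> Pts" "Q \<in> Pts" "X \<in> Pts" "Y \<in> Pts" "P \<noteq> Q"
    and "P \<notin> {X,Y}" "Q \<notin> {X,Y}"
    and "C {P,X} = C {Q,X}" "C {P,Y} = C {Q,Y}"
  shows "C {P,X} = C {P,Y}"
proof -
  have "C {P,Q} = C {X,P}"
    using PL_cograph_triangle[OF assms(1,2,4,3)] assms by (metis insert_commute)
  moreover have "C {P,Q} = C {Y,P}"
    using PL_cograph_triangle[OF assms(1,2,5,3)] assms by (metis insert_commute)
  ultimately show ?thesis by (simp add: insert_commute)
qed

lemma PL_cograph_balanced_points_same_edge:
  assumes "PL_cograph Pts C"
    and "P \<in> Pts" "Q \<in> Pts" "X \<in> Pts" "Y \<in> Pts" "Z \<in> Pts" "P \<noteq> Q" "X \<noteq> Y"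
    and "P \<notin> {X,Y,Z}" "Q \<notin> {X,Y,Z}" "Z \<noteq> X"
    and "C {P,X} = C {P,Y}" "C {Q,X} = C {Q,Y}" "C {P,Z} = C {Q,Z}"
  shows "C {Z,X} = C {X,Y}"
proof -
  have XP: "C {X,P} = C {X,Y}"
    using PL_cograph_triangle[OF assms(1,4,2,5)] assms by (metis insert_commute)
  have XQ: "C {X,Q} = C {X,Y}"
    using PL_cograph_triangle[OF assms(1,4,3,5)] assms by (metis insert_commute)
  have PQ: "C {P,Q} = C {X,Y}"
    using PL_cograph_triangle[OF assms(1,2,4,3)] assms XP XQ by (metis insert_commute)
  have ZP: "C {Z,P} = C {X,Y}"
    using PL_cograph_triangle[OF assms(1,2,6,3)] assms PQ by (metis insert_commute)
  show ?thesis
    using PL_cograph_triangle[OF assms(1,6,2,4)] assms XP ZP by (metis insert_commute)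
qed

theorem theorem5p1:
  fixes Pts :: "'p set" and C :: "'p set \<Rightarrow> 'e" and X Y Z :: 'p
  assumes "PL_cograph Pts C"
    and "cograph_nonconstant Pts C"
    and "X \<in> Pts" "Y \<in> Pts" "X \<noteq> Y"
    and "Z \<in> Pts" "Z \<noteq> X" "Z \<noteq> Y"
    and "C {X,Y} \<noteq> C {Z,X}" "C {X,Y} \<noteq> C {Z,Y}" "C {Z,X} \<noteq> C {Z,Y}"
  shows "\<forall>P \<in> Pts - {X,Y}. \<forall>Q \<in> Pts - {X,Y}. P \<noteq> Q \<longrightarrow> label C X Y Z P \<noteq> label C X Y Z Q"
proof (intro ballI impI notI)
  fix P Q
  assume P: "P \<in> Pts - {X,Y}" and Q: "Q \<in> Pts - {X,Y}" and "P \<noteq> Q"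
    and same_label: "label C X Y Z P = label C X Y Z Q"
  show False
  proof (cases "C {P,X} = C {P,Y}")
    case False
    with same_label have "C {P,X} = C {Q,X}" "C {P,Y} = C {Q,Y}"
      unfolding label_def by (auto split: if_splits)
    with PL_cograph_same_edges_to_two_points[OF assms(1), of P Q X Y] P Q \<open>P \<noteq> Q\<close> assms(3,4)
    have "C {P,X} = C {P,Y}" by blast
    with False show False ..
  next
    case True
    with same_label have Q_balanced: "C {Q,X} = C {Q,Y}" and "C {P,Z} = C {Q,Z}"
      unfolding label_def by (auto split: if_splits)
    have "P \<noteq> Z" "Q \<noteq> Z"
      using True Q_balanced assms(11) by (auto simp: insert_commute)
    with PL_cograph_balanced_points_same_edge[OF assms(1), of P Q X Y Z] P Q \<open>P \<noteq> Q\<close>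
      True Q_balanced \<open>C {P,Z} = C {Q,Z}\<close> assms(3-7)
    have "C {Z,X} = C {X,Y}" by blast
    with assms(9) show False by simp
  qed
qed

end
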